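(* Let $f:\mathbb{R}^n\to\mathbb{R}$ be convex and continuously differentiable, let $w^*\in\Delta^n$ be a minimizer of $f$ over $\Delta^n$, and let $t\mapsto w^t$ be continuously differentiable in $t$ and satisfy the Cauchy-Simplex gradient flow $$\frac{dw^t}{dt} = -\beta\, w^t\odot\Big(\nabla f(w^t) - \big(w^t\cdot\nabla f(w^t)\big)\mathbb{1}\Big)$$ for a constant $\beta>0$. Then, as long as $w^t\in\operatorname{int}(\Delta^n)$, the relative entropy $$D(w^*\,|\,w^t)=\sum_{i:\,w^*_i\neq 0} w^*_i\log\!\left(\frac{w^*_i}{w^t_i}\right)$$ is a decreasing (non-increasing) function of time.
   Context: $\Delta^n=\{w\in\mathbb{R}^n : \sum_i w_i=1,\ w_i\ge 0\}$ is the probability simplex and $\operatorname{int}(\Delta^n)$ denotes the points of $\Delta^n$ with all coordinates strictly positive. $\odot$ denotes componentwise multiplication and $\mathbb{1}$ the all-ones vector. *)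

theory Defs
  imports "HOL-Analysis.Analysis"
begin

definition prob_simplex :: "(real ^ 'n) set" where
  "prob_simplex = {w. (\<Sum>i\<in>UNIV. w $ i) = 1 \<and> (\<forall>i. 0 \<le> w $ i)}"

definition prob_simplex_int :: "(real ^ 'n) set" where
  "prob_simplex_int = {w. (\<Sum>i\<in>UNIV. w $ i) = 1 \<and> (\<forall>i. 0 < w $ i)}"

definition rel_entropy :: "real ^ 'n \<Rightarrow> real ^ 'n \<Rightarrow> real" where
  "rel_entropy u w = (\<Sum>i\<in>{i. u $ i \<noteq> 0}. u $ i * ln (u $ i / w $ i))"

definition cs_field :: "real \<Rightarrow> (real ^ 'n \<Rightarrow> real ^ 'n) \<Rightarrow> real ^ 'n \<Rightarrow> real ^ 'n" where
  "cs_field \<beta> gf w = (\<chi> i. - \<beta> * (w $ i * (gf w $ i - (w \<bullet> gf w))))"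

end

theory Submission imports Defs begin

text \<open>Along the flow, d/dt D(w* | w) = \<beta> \<nabla>f(w)\<bullet>(w* - w): the factor w_i in the
  flow cancels the 1/w_i coming from the logarithm, and the normalisation
  \<Sum>w*_i = 1 turns the mean-field term into w\<bullet>\<nabla>f(w). By convexity
  \<nabla>f(w)\<bullet>(w* - w) \<le> f w* - f w, which is \<le> 0 because w* minimises f on the simplex.\<close>

lemma convex_on_has_derivative_above_tangent:
  fixes f :: "'a::real_normed_vector \<Rightarrow> real"
  assumes conv: "convex_on UNIV f"
    and deriv: "(f has_derivative f') (at x)"
  shows "f x + f' (y - x) \<le> f y"
proof -
  define h where "h = (\<lambda>s::real. f (x + s *\<^sub>R (y - x)))"
  have "convex_on UNIV h"
    unfolding h_def
  proof (rule convex_onI)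
    fix u a b :: real assume "0 < u" "u < 1"
    moreover have "x + ((1 - u) * a + u * b) *\<^sub>R (y - x)
        = (1 - u) *\<^sub>R (x + a *\<^sub>R (y - x)) + u *\<^sub>R (x + b *\<^sub>R (y - x))"
      by (simp add: algebra_simps)
    ultimately show "f (x + ((1 - u) *\<^sub>R a + u *\<^sub>R b) *\<^sub>R (y - x))
        \<le> (1 - u) * f (x + a *\<^sub>R (y - x)) + u * f (x + b *\<^sub>R (y - x))"
      using conv by (simp add: convex_on_def)
  qed simp
  moreover have "(h has_real_derivative f' (y - x)) (at 0)"
  proof -
    interpret bounded_linear f'
      using deriv by (rule has_derivative_bounded_linear)
    have "((\<lambda>s. x + s *\<^sub>R (y - x)) has_derivative (\<lambda>s. s *\<^sub>R (y - x))) (at 0)"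
      by (auto intro!: derivative_eq_intros)
    from has_derivative_compose[OF this, of f f'] deriv
    have "(h has_derivative (\<lambda>s. f' (s *\<^sub>R (y - x)))) (at 0)"
      by (simp add: h_def o_def)
    then show ?thesis
      by (simp add: has_field_derivative_def scale mult.commute[of _ "f' (y - x)"])
  qed
  ultimately have "f' (y - x) * (1 - 0) \<le> h 1 - h 0"
    by (intro convex_on_imp_above_tangent) auto
  then show ?thesis
    by (simp add: h_def)
qed

lemma has_real_derivative_nonpos_imp_antimono_on:
  fixes g :: "real \<Rightarrow> real"
  assumes T: "is_interval T"
    and deriv: "\<And>t. t \<in> T \<Longrightarrow> (g has_real_derivative g' t) (at t within T)"
    and nonpos: "\<And>t. t \<in> T \<Longrightarrow> g' t \<le> 0"
  shows "antimono_on T g"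
proof (rule monotone_onI)
  fix s t assume s: "s \<in> T" and t: "t \<in> T" and "s \<le> t"
  have sub: "{s..t} \<subseteq> T"
    using T s t unfolding is_interval_1 by (meson atLeastAtMost_iff subsetI)
  have "\<exists>x\<in>{s..t}. g t - g s = g' x * (t - s)"
  proof (rule mvt_very_simple[OF \<open>s \<le> t\<close>])
    fix x assume "s \<le> x" "x \<le> t"
    with sub have "x \<in> T" by auto
    from has_derivative_subset[OF deriv[OF this, unfolded has_field_derivative_def] sub]
    show "(g has_derivative (\<lambda>h. g' x * h)) (at x within {s..t})" .
  qed
  then obtain x where "x \<in> T" and mvt: "g t - g s = g' x * (t - s)"
    using sub by auto
  have "g' x * (t - s) \<le> 0"
    using nonpos[OF \<open>x \<in> T\<close>] \<open>s \<le> t\<close> by (simp add: mult_nonpos_nonneg)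
  with mvt show "g t \<le> g s"
    by simp
qed

lemma has_real_derivative_mult_ln_div:
  fixes v :: "real \<Rightarrow> real"
  assumes deriv: "(v has_real_derivative v') (at t within T)"
    and c: "0 < c" and v: "0 < v t"
  shows "((\<lambda>s. c * ln (c / v s)) has_real_derivative - (c * v' / v t)) (at t within T)"
proof (rule DERIV_cong)
  have "((\<lambda>s. c / v s) has_real_derivative (0 * v t - c * v') / (v t * v t)) (at t within T)"
    using DERIV_divide[OF DERIV_const deriv] v by simp
  from DERIV_cmult[OF DERIV_chain2[OF DERIV_ln this], of c] c v
  show "((\<lambda>s. c * ln (c / v s)) has_real_derivative
      c * (inverse (c / v t) * ((0 * v t - c * v') / (v t * v t)))) (at t within T)"
    by simp
  show "c * (inverse (c / v t) * ((0 * v t - c * v') / (v t * v t))) = - (c * v' / v t)"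
    using c v by (simp add: field_simps)
qed

lemma has_real_derivative_rel_entropy:
  fixes u :: "real ^ 'n" and w :: "real \<Rightarrow> real ^ 'n"
  assumes u_nonneg: "\<And>i. 0 \<le> u $ i"
    and w_pos: "\<And>i. 0 < w t $ i"
    and deriv: "(w has_vector_derivative w') (at t within T)"
  shows "((\<lambda>s. rel_entropy u (w s)) has_real_derivative
           - (\<Sum>i | u $ i \<noteq> 0. u $ i * w' $ i / w t $ i)) (at t within T)"
proof -
  have "((\<lambda>s. u $ i * ln (u $ i / w s $ i)) has_real_derivative
          - (u $ i * w' $ i / w t $ i)) (at t within T)" if "u $ i \<noteq> 0" for i
  proof -
    have "0 < u $ i"
      using u_nonneg[of i] that by linarith
    have "((\<lambda>s. w s $ i) has_real_derivative w' $ i) (at t within T)"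
      using bounded_linear.has_vector_derivative[OF bounded_linear_vec_nth deriv, of i]
      by (simp add: has_real_derivative_iff_has_vector_derivative)
    from has_real_derivative_mult_ln_div[OF this \<open>0 < u $ i\<close> w_pos]
    show ?thesis .
  qed
  then have "((\<lambda>s. \<Sum>i | u $ i \<noteq> 0. u $ i * ln (u $ i / w s $ i)) has_real_derivative
          (\<Sum>i | u $ i \<noteq> 0. - (u $ i * w' $ i / w t $ i))) (at t within T)"
    by (intro DERIV_sum) simp
  then show ?thesis
    by (simp only: rel_entropy_def sum_negf)
qed

lemma cs_field_div_nth:
  assumes "w $ i \<noteq> 0"
  shows "cs_field \<beta> gf w $ i / w $ i = - \<beta> * (gf w $ i - w \<bullet> gf w)"
  using assms by (simp add: cs_field_def)

lemma sum_support_cs_field_div: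
  fixes u w :: "real ^ 'n"
  assumes u_sum: "(\<Sum>i\<in>UNIV. u $ i) = 1"
    and w_nz: "\<And>i. w $ i \<noteq> 0"
  shows "(\<Sum>i | u $ i \<noteq> 0. u $ i * cs_field \<beta> gf w $ i / w $ i) = - \<beta> * (gf w \<bullet> (u - w))"
proof -
  let ?g = "gf w"
  have "(\<Sum>i | u $ i \<noteq> 0. u $ i * cs_field \<beta> gf w $ i / w $ i)
      = (\<Sum>i\<in>UNIV. u $ i * (- \<beta> * (?g $ i - w \<bullet> ?g)))"
    by (rule sum.mono_neutral_cong_left)
      (auto simp: cs_field_div_nth[OF w_nz] simp flip: times_divide_eq_right)
  also have "\<dots> = - \<beta> * ((\<Sum>i\<in>UNIV. u $ i * ?g $ i) - (\<Sum>i\<in>UNIV. u $ i) * (w \<bullet> ?g))"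
    by (simp add: sum_distrib_left sum_distrib_right right_diff_distrib sum_subtractf sum_negf
        mult.left_commute)
  also have "\<dots> = - \<beta> * (u \<bullet> ?g - w \<bullet> ?g)"
    by (simp add: u_sum inner_vec_def)
  also have "\<dots> = - \<beta> * (?g \<bullet> (u - w))"
    by (simp add: inner_diff_right inner_commute)
  finally show ?thesis .
qed

theorem theorem4p2:
  fixes f :: "real ^ 'n \<Rightarrow> real"
    and gf :: "real ^ 'n \<Rightarrow> real ^ 'n"
    and wstar :: "real ^ 'n"
    and w :: "real \<Rightarrow> real ^ 'n"
    and T :: "real set"
    and \<beta> :: real
  assumes conv: "convex_on UNIV f"
    and grad: "\<And>x. (f has_derivative (\<lambda>h. gf x \<bullet> h)) (at x)"
    and grad_cont: "continuous_on UNIV gf"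
    and wstar_in: "wstar \<in> prob_simplex"
    and wstar_min: "\<And>v. v \<in> prob_simplex \<Longrightarrow> f wstar \<le> f v"
    and beta_pos: "\<beta> > 0"
    and T_int: "is_interval T"
    and flow: "\<And>t. t \<in> T \<Longrightarrow> (w has_vector_derivative cs_field \<beta> gf (w t)) (at t within T)"
    and w_C1: "continuous_on T (\<lambda>t. cs_field \<beta> gf (w t))"
    and interior: "\<And>t. t \<in> T \<Longrightarrow> w t \<in> prob_simplex_int"
  shows "\<forall>s\<in>T. \<forall>t\<in>T. s \<le> t \<longrightarrow> rel_entropy wstar (w t) \<le> rel_entropy wstar (w s)"
proof -
  have wstar_nonneg: "\<And>i. 0 \<le> wstar $ i" and wstar_sum: "(\<Sum>i\<in>UNIV. wstar $ i) = 1"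
    using wstar_in by (auto simp: prob_simplex_def)
  have "antimono_on T (\<lambda>t. rel_entropy wstar (w t))"
  proof (rule has_real_derivative_nonpos_imp_antimono_on[OF T_int])
    fix t assume t: "t \<in> T"
    then have w_pos: "\<And>i. 0 < w t $ i" and "w t \<in> prob_simplex"
      using interior by (auto simp: prob_simplex_int_def prob_simplex_def less_imp_le)
    have w_nz: "w t $ i \<noteq> 0" for i
      using w_pos[of i] by simp
    show "((\<lambda>t. rel_entropy wstar (w t)) has_real_derivative \<beta> * (gf (w t) \<bullet> (wstar - w t)))
        (at t within T)"
      using has_real_derivative_rel_entropy[OF wstar_nonneg w_pos flow[OF t]]
      unfolding sum_support_cs_field_div[OF wstar_sum w_nz] mult_minus_left minus_minus .
    have "f (w t) + gf (w t) \<bullet> (wstar - w t) \<le> f wstar"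
      by (rule convex_on_has_derivative_above_tangent[OF conv grad])
    with wstar_min[OF \<open>w t \<in> prob_simplex\<close>] beta_pos
    show "\<beta> * (gf (w t) \<bullet> (wstar - w t)) \<le> 0"
      by (simp add: mult_nonneg_nonpos)
  qed
  then show ?thesis
    unfolding monotone_on_def by blast
qed

end
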